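(* Let $d$ be sufficiently large and $\delta\in(0,1)$. Fix $\mathbf{A}\in\{-1,1\}^{(d/2)\times d}$. With probability at least $1-d^{-\omega(1)}$ over independent uniform $\mathbf{v}_1,\dots,\mathbf{v}_N\in\frac1{\sqrt d}\{-1,1\}^d$, $$\min_{\mathbf{x}\in\mathbb{B}^d}F_{\mathbf{A},V}(\mathbf{x})\le-\frac{1}{\sqrt dL}\cdot\frac{1}{\sqrt N\log^2 d}.$$
   Context: $F_{\mathbf{A},V}(\mathbf{x})=\frac{1}{\sqrt dL}\max\{L\|\mathbf{A}\mathbf{x}\|_\infty-1,\max_{i\in[N]}(\langle\mathbf{v}_i,\mathbf{x}\rangle-i\gamma)\}$ with $\gamma=\log^2 d/d^{\delta/4}$, $N=d^{\delta/6}/\log^4 d$, $L=\exp(\log^5 d)$; $\mathbb{B}^d$ is the unit ball. *)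

theory Defs
  imports "HOL-Probability.Probability"
begin

text \<open>Parameters (log = natural logarithm).\<close>
definition gam :: "nat \<Rightarrow> real \<Rightarrow> real" where
  "gam d \<delta> = (ln (real d))^2 / (real d) powr (\<delta>/4)"

definition NN :: "nat \<Rightarrow> real \<Rightarrow> nat" where
  "NN d \<delta> = nat \<lfloor>(real d) powr (\<delta>/6) / (ln (real d))^4\<rfloor>"

definition LL :: "nat \<Rightarrow> real" where
  "LL d = exp ((ln (real d))^5)"

text \<open>Vectors of R^d are functions nat => real, only coordinates < d matter.
  The d/2 x d matrix A is a function nat => nat => real (rows < d div 2, columns < d).
  The random vectors v_i = s_i / sqrt d, i in {1..N}, with s_i a sign vector.\<close>

definition sign_matrices :: "nat \<Rightarrow> (nat \<Rightarrow> nat \<Rightarrow> real) set" where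
  "sign_matrices d = {A. \<forall>j<d div 2. \<forall>k<d. A j k \<in> {-1, 1}}"

definition sign_samples :: "nat \<Rightarrow> nat \<Rightarrow> (nat \<Rightarrow> nat \<Rightarrow> real) set" where
  "sign_samples d N = PiE {1..N} (\<lambda>_. PiE {..<d} (\<lambda>_. {-1, 1}))"

definition vvec :: "nat \<Rightarrow> (nat \<Rightarrow> nat \<Rightarrow> real) \<Rightarrow> nat \<Rightarrow> nat \<Rightarrow> real" where
  "vvec d s i k = s i k / sqrt (real d)"

definition infnorm_Ax :: "nat \<Rightarrow> (nat \<Rightarrow> nat \<Rightarrow> real) \<Rightarrow> (nat \<Rightarrow> real) \<Rightarrow> real" where
  "infnorm_Ax d A x = Max ((\<lambda>j. \<bar>\<Sum>k<d. A j k * x k\<bar>) ` {..<d div 2})"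

definition FAV :: "nat \<Rightarrow> real \<Rightarrow> (nat \<Rightarrow> nat \<Rightarrow> real) \<Rightarrow> (nat \<Rightarrow> nat \<Rightarrow> real)
    \<Rightarrow> (nat \<Rightarrow> real) \<Rightarrow> real" where
  "FAV d \<delta> A s x = 1 / (sqrt (real d) * LL d) *
     max (LL d * infnorm_Ax d A x - 1)
         (Max ((\<lambda>i. (\<Sum>k<d. vvec d s i k * x k) - real i * gam d \<delta>) ` {1..NN d \<delta>}))"

definition unit_ball :: "nat \<Rightarrow> (nat \<Rightarrow> real) set" where
  "unit_ball d = {x. (\<Sum>k<d. (x k)^2) \<le> 1}"

end

theory Submission
  imports Defs "HOL-Real_Asymp.Real_Asymp"
begin

(* Orthonormalise the rows of A and let P be the projection onto the orthogonal complement of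
   their span, which has codimension at most d/2. For a uniform sign vector s,
   <s, P s> = d - |(I - P) s|^2; splitting the coordinates into blocks of size about d^(9/10),
   Hoeffding's inequality bounds the block-diagonal part of |(I - P) s|^2 by d/2 + d/8 and each
   off-diagonal block term by a tiny amount, so <s, P s> >= d/4 with overwhelming probability.
   Conditioning on s_j, Hoeffding again gives |<s_i, P s_j>| <= d/(8N) for i <> j.
   On this event the Gram matrix of the P s_j is diagonally dominant, so x = -U/|U| with
   U = sum_j P s_j satisfies A x = 0 and <v_i, x> <= -1/(8 sqrt (2N)) for all i.
   The union bound leaves a failure probability exp(-d^Omega(1)), smaller than any power of d. *)

section \<open>Orthogonal projections in the first d coordinates\<close>

definition dot :: "nat \<Rightarrow> (nat \<Rightarrow> real) \<Rightarrow> (nat \<Rightarrow> real) \<Rightarrow> real" where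
  "dot d u v = (\<Sum>k<d. u k * v k)"

lemma dot_commute: "dot d u v = dot d v u"
  by (simp add: dot_def mult.commute)

lemma dot_sum_right: "dot d u (\<lambda>k. \<Sum>c\<in>C. w c k) = (\<Sum>c\<in>C. dot d u (w c))"
  by (simp add: dot_def sum_distrib_left sum.swap[of _ C])

lemma dot_sum_left: "dot d (\<lambda>k. \<Sum>c\<in>C. w c k) u = (\<Sum>c\<in>C. dot d (w c) u)"
  using dot_sum_right[where d=d and u=u and C=C and w=w] by (simp add: dot_commute)

lemma dot_lincomb_right: "dot d u (\<lambda>k. \<Sum>c\<in>C. f c * w c k) = (\<Sum>c\<in>C. f c * dot d u (w c))"
  by (simp add: dot_def sum_distrib_left sum_distrib_right algebra_simps sum.swap[of _ C])

lemma dot_lincomb_left: "dot d (\<lambda>k. \<Sum>c\<in>C. f c * w c k) u = (\<Sum>c\<in>C. f c * dot d (w c) u)"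
  using dot_lincomb_right[where d=d and u=u and C=C and f=f and w=w] by (simp add: dot_commute)

lemma dot_diff_right: "dot d u (\<lambda>k. v k - w k) = dot d u v - dot d u w"
  by (simp add: dot_def algebra_simps sum_subtractf)

lemma dot_self_nonneg: "0 \<le> dot d u u"
  by (simp add: dot_def sum_nonneg)

lemma dot_self_eq_0D: "dot d u u = 0 \<Longrightarrow> k < d \<Longrightarrow> u k = 0"
  unfolding dot_def by (subst (asm) sum_nonneg_eq_0_iff) auto

lemma dot_self_sign:
  assumes "\<forall>k<d. y k \<in> {-1, 1}"
  shows "dot d y y = real d"
proof -
  have "dot d y y = (\<Sum>k<d. 1)" unfolding dot_def using assms by (intro sum.cong) auto
  then show ?thesis by simp
qed

definition orthonormal_list :: "nat \<Rightarrow> (nat \<Rightarrow> real) list \<Rightarrow> bool" where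
  "orthonormal_list d qs \<longleftrightarrow>
     (\<forall>a<length qs. \<forall>b<length qs. dot d (qs!a) (qs!b) = (if a = b then 1 else 0))"

lemma sum_mult_dot_orthonormal:
  assumes "orthonormal_list d qs" "b < length qs"
  shows "(\<Sum>c<length qs. f c * dot d (qs!b) (qs!c)) = f b"
proof -
  have "(\<Sum>c<length qs. f c * dot d (qs!b) (qs!c)) = (\<Sum>c<length qs. if c = b then f c else 0)"
    using assms by (intro sum.cong) (auto simp: orthonormal_list_def)
  also have "\<dots> = f b" using assms by simp
  finally show ?thesis .
qed

lemma dot_self_orthonormal_lincomb:
  assumes "orthonormal_list d qs"
  shows "dot d (\<lambda>k. \<Sum>c<length qs. \<beta> c * (qs!c) k) (\<lambda>k. \<Sum>c<length qs. \<beta> c * (qs!c) k)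
     = (\<Sum>c<length qs. (\<beta> c)^2)"
proof -
  have "dot d (\<lambda>k. \<Sum>c<length qs. \<beta> c * (qs!c) k) (\<lambda>k. \<Sum>c<length qs. \<beta> c * (qs!c) k)
      = (\<Sum>b<length qs. \<beta> b * (\<Sum>c<length qs. \<beta> c * dot d (qs!b) (qs!c)))"
    by (simp add: dot_lincomb_left dot_lincomb_right)
  also have "\<dots> = (\<Sum>b<length qs. \<beta> b * \<beta> b)"
    using sum_mult_dot_orthonormal[OF assms] by (intro sum.cong) auto
  finally show ?thesis by (simp add: power2_eq_square)
qed

definition perp :: "nat \<Rightarrow> (nat \<Rightarrow> real) list \<Rightarrow> (nat \<Rightarrow> real) \<Rightarrow> nat \<Rightarrow> real" where
  "perp d qs y = (\<lambda>k. y k - (\<Sum>c<length qs. dot d (qs!c) y * (qs!c) k))"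

lemma dot_perp_right:
  "dot d u (perp d qs y) = dot d u y - (\<Sum>c<length qs. dot d (qs!c) u * dot d (qs!c) y)"
  unfolding perp_def dot_diff_right dot_lincomb_right by (simp add: dot_commute mult.commute)

lemma dot_basis_perp:
  assumes "orthonormal_list d qs" "b < length qs"
  shows "dot d (qs!b) (perp d qs y) = 0"
proof -
  have "(\<Sum>c<length qs. dot d (qs!c) (qs!b) * dot d (qs!c) y) = dot d (qs!b) y"
    using sum_mult_dot_orthonormal[OF assms, of "\<lambda>c. dot d (qs!c) y"]
    by (simp add: dot_commute mult.commute)
  then show ?thesis by (simp add: dot_perp_right)
qed

lemma dot_perp_perp:
  assumes "orthonormal_list d qs"
  shows "dot d (perp d qs y) (perp d qs z) = dot d y (perp d qs z)"
proof -
  have "dot d (perp d qs y) (perp d qs z) = dot d (perp d qs z) (perp d qs y)"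
    by (rule dot_commute)
  also have "\<dots> = dot d (perp d qs z) y
      - (\<Sum>c<length qs. dot d (qs!c) (perp d qs z) * dot d (qs!c) y)"
    by (rule dot_perp_right)
  also have "(\<Sum>c<length qs. dot d (qs!c) (perp d qs z) * dot d (qs!c) y) = 0"
    using dot_basis_perp[OF assms] by simp
  finally show ?thesis by (simp add: dot_commute)
qed

lemma dot_self_perp: "dot d y (perp d qs y) = dot d y y - (\<Sum>c<length qs. (dot d (qs!c) y)^2)"
  using dot_perp_right[of d y qs y] by (simp add: power2_eq_square)

lemma bessel_inequality:
  assumes "orthonormal_list d qs"
  shows "(\<Sum>c<length qs. (dot d (qs!c) y)^2) \<le> dot d y y"
proof -
  have "0 \<le> dot d (perp d qs y) (perp d qs y)" by (rule dot_self_nonneg)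
  also have "\<dots> = dot d y y - (\<Sum>c<length qs. (dot d (qs!c) y)^2)"
    by (simp add: dot_perp_perp[OF assms] dot_self_perp)
  finally show ?thesis by simp
qed

definition in_span_list :: "nat \<Rightarrow> (nat \<Rightarrow> real) list \<Rightarrow> (nat \<Rightarrow> real) \<Rightarrow> bool" where
  "in_span_list d qs u \<longleftrightarrow> (\<forall>k<d. u k = (\<Sum>c<length qs. dot d (qs!c) u * (qs!c) k))"

lemma dot_span_perp:
  assumes "in_span_list d qs u"
  shows "dot d u (perp d qs y) = 0"
proof -
  have "dot d u y = dot d (\<lambda>k. \<Sum>c<length qs. dot d (qs!c) u * (qs!c) k) y"
    using assms unfolding in_span_list_def dot_def by (intro sum.cong) auto
  also have "\<dots> = (\<Sum>c<length qs. dot d (qs!c) u * dot d (qs!c) y)"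
    by (simp add: dot_lincomb_left)
  finally show ?thesis by (simp add: dot_perp_right)
qed

lemma in_span_list_perp_eq_0:
  assumes "\<And>k. k < d \<Longrightarrow> perp d qs a k = 0"
  shows "in_span_list d qs a"
  using assms by (simp add: in_span_list_def perp_def)

lemma gram_schmidt_step:
  assumes on: "orthonormal_list d qs" and nz: "dot d (perp d qs a) (perp d qs a) \<noteq> 0"
  defines "q \<equiv> (\<lambda>k. perp d qs a k / sqrt (dot d (perp d qs a) (perp d qs a)))"
  shows "orthonormal_list d (qs @ [q])" and "in_span_list d (qs @ [q]) a"
    and "\<And>u. in_span_list d qs u \<Longrightarrow> in_span_list d (qs @ [q]) u"
proof -
  define n where "n = length qs"
  define res where "res = perp d qs a"
  define nr where "nr = sqrt (dot d res res)"
  have nr_pos: "nr > 0" using nz dot_self_nonneg[of d res] by (simp add: nr_def res_def)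
  have q: "q = (\<lambda>k. res k / nr)" by (simp add: q_def res_def nr_def)
  have dot_q: "dot d w q = dot d w res / nr" for w
    by (simp add: q dot_def sum_divide_distrib)
  have qq: "dot d q q = 1"
    using nr_pos dot_self_nonneg[of d res] by (simp add: dot_q dot_commute[of d q] nr_def)
  have q_orth: "dot d (qs!b) q = 0" if "b < n" for b
    using dot_basis_perp[OF on] that by (simp add: dot_q res_def n_def)
  have nth': "(qs @ [q])!c = (if c < n then qs!c else q)" if "c < Suc n" for c
    using that by (auto simp: nth_append n_def)
  have sum_split: "(\<Sum>c<length (qs @ [q]). f ((qs @ [q])!c)) = (\<Sum>c<n. f (qs!c)) + f q"
    for f :: "_ \<Rightarrow> real"
    by (simp add: n_def nth_append)
  show "orthonormal_list d (qs @ [q])"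
    unfolding orthonormal_list_def
  proof (intro allI impI)
    fix b c assume "b < length (qs @ [q])" "c < length (qs @ [q])"
    then have b: "b < Suc n" and c: "c < Suc n" by (auto simp: n_def)
    show "dot d ((qs @ [q])!b) ((qs @ [q])!c) = (if b = c then 1 else 0)"
      using on b c q_orth qq unfolding nth'[OF b] nth'[OF c]
      by (auto simp: orthonormal_list_def n_def dot_commute less_Suc_eq)
  qed
  show "in_span_list d (qs @ [q]) a"
    unfolding in_span_list_def
  proof (intro allI impI)
    fix k assume "k < d"
    have "dot d q a = dot d q res"
      using q_orth by (simp add: res_def dot_perp_right dot_commute[of d q] n_def)
    also have "\<dots> = nr * nr / nr"
      using dot_self_nonneg[of d res] by (simp add: dot_commute[of d q] dot_q nr_def)
    also have "\<dots> = nr" using nr_pos by simp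
    finally have "dot d q a * q k = res k" using nr_pos by (simp add: q)
    then show "a k = (\<Sum>c<length (qs @ [q]). dot d ((qs @ [q])!c) a * ((qs @ [q])!c) k)"
      using sum_split[of "\<lambda>q. dot d q a * q k"] by (simp add: res_def perp_def n_def)
  qed
  fix u assume u: "in_span_list d qs u"
  have "dot d q u = 0"
    using dot_span_perp[OF u, of a] by (simp add: dot_commute[of d q] dot_q res_def)
  then show "in_span_list d (qs @ [q]) u"
    using u sum_split[of "\<lambda>q. dot d q u * q _"] by (simp add: in_span_list_def n_def)
qed

lemma gram_schmidt_exists:
  "\<exists>qs. length qs \<le> length rs \<and> orthonormal_list d qs \<and> (\<forall>u\<in>set rs. in_span_list d qs u)"
proof (induction rs)
  case Nil
  show ?case by (rule exI[of _ "[]"]) (simp add: orthonormal_list_def)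
next
  case (Cons a rs)
  then obtain qs where len: "length qs \<le> length rs" and on: "orthonormal_list d qs"
    and span: "\<forall>u\<in>set rs. in_span_list d qs u" by blast
  show ?case
  proof (cases "dot d (perp d qs a) (perp d qs a) = 0")
    case True
    then have "in_span_list d qs a" by (intro in_span_list_perp_eq_0 dot_self_eq_0D)
    then show ?thesis using len on span by (intro exI[of _ qs]) auto
  next
    case False
    from gram_schmidt_step[OF on False] show ?thesis
      using len span by (intro exI) auto
  qed
qed

section \<open>Rademacher vectors\<close>

lemma prob_Pi_pmf_le_by_sections:
  fixes p :: "'a \<Rightarrow> 'b pmf"
  assumes fin: "finite I" and JI: "J \<subseteq> I"
    and sections: "\<And>g. g \<in> set_pmf (Pi_pmf (I - J) dflt p) \<Longrightarrow>
        measure_pmf.prob (Pi_pmf J dflt p) {f. (\<lambda>x. if x \<in> J then f x else g x) \<in> E} \<le> c"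
  shows "measure_pmf.prob (Pi_pmf I dflt p) E \<le> c"
proof -
  define X where "X = Pi_pmf J dflt p"
  define Y where "Y = Pi_pmf (I - J) dflt p"
  define h :: "('a \<Rightarrow> 'b) \<times> ('a \<Rightarrow> 'b) \<Rightarrow> 'a \<Rightarrow> 'b"
    where "h = (\<lambda>(f, g) x. if x \<in> J then f x else g x)"
  have finJ: "finite J" using fin JI finite_subset by blast
  have "Pi_pmf I dflt p = Pi_pmf (J \<union> (I - J)) dflt p" using JI by (simp add: Un_absorb1)
  also have "\<dots> = map_pmf h (pair_pmf X Y)"
    unfolding h_def X_def Y_def by (rule Pi_pmf_union) (use fin finJ in auto)
  finally have eq: "Pi_pmf I dflt p = map_pmf h (pair_pmf X Y)" .
  have pair: "pair_pmf X Y = bind_pmf Y (\<lambda>g. map_pmf (\<lambda>f. (f, g)) X)"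
    by (simp add: pair_pmf_def map_pmf_def bind_commute_pmf[of X Y])
  have sec: "measure_pmf.prob (map_pmf (\<lambda>f. (f, g)) X) (h -` E) \<le> c" if "g \<in> set_pmf Y" for g
    using sections that by (simp add: measure_map_pmf h_def vimage_def X_def Y_def)
  obtain g0 where "g0 \<in> set_pmf Y" using set_pmf_not_empty by fast
  then have c0: "c \<ge> 0" using sec[of g0] by (meson measure_nonneg order_trans)
  have "ennreal (measure_pmf.prob (Pi_pmf I dflt p) E)
      = emeasure (measure_pmf (pair_pmf X Y)) (h -` E)"
    unfolding eq by (simp add: measure_pmf.emeasure_eq_measure measure_map_pmf)
  also have "\<dots> = (\<integral>\<^sup>+g. emeasure (measure_pmf (map_pmf (\<lambda>f. (f, g)) X)) (h -` E) \<partial>measure_pmf Y)"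
    unfolding pair by (rule emeasure_bind_pmf)
  also have "\<dots> \<le> (\<integral>\<^sup>+g. ennreal c \<partial>measure_pmf Y)"
    by (intro nn_integral_mono_AE AE_pmfI)
       (simp add: measure_pmf.emeasure_eq_measure ennreal_leI sec[unfolded measure_map_pmf])
  also have "\<dots> = ennreal c" by (simp add: measure_pmf.emeasure_space_1)
  finally show ?thesis using c0 by (simp add: ennreal_le_iff)
qed

definition rademacher :: "real pmf" where
  "rademacher = pmf_of_set {-1, 1}"

lemma Pi_rademacher_sign:
  assumes "finite J" "\<omega> \<in> set_pmf (Pi_pmf J dflt (\<lambda>_. rademacher))" "k \<in> J"
  shows "\<omega> k \<in> {-1, 1}"
  using set_Pi_pmf_subset'[OF assms(1), of dflt "\<lambda>_. rademacher"] assms(2,3)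
  by (auto simp: PiE_dflt_def rademacher_def)

lemma finite_set_Pi_rademacher: "finite J \<Longrightarrow> finite (set_pmf (Pi_pmf J dflt (\<lambda>_. rademacher)))"
  by (rule finite_subset[OF set_Pi_pmf_subset']) (auto simp: rademacher_def)

lemma indep_vars_Pi_rademacher:
  assumes "finite J"
  shows "prob_space.indep_vars (measure_pmf (Pi_pmf J dflt (\<lambda>_. rademacher)))
           (\<lambda>_. borel) (\<lambda>k \<omega>. \<omega> k) J"
  using prob_space.indep_vars_compose2[OF measure_pmf.prob_space_axioms
      indep_vars_Pi_pmf[OF assms], where Y="\<lambda>_ v. v" and N="\<lambda>_. borel"]
  by (simp add: measurable_count_space_eq1)

lemma expectation_Pi_rademacher:
  assumes "finite J" "k \<in> J"
  shows "measure_pmf.expectation (Pi_pmf J dflt (\<lambda>_. rademacher)) (\<lambda>\<omega>. \<omega> k) = 0"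
proof -
  have "measure_pmf.expectation (Pi_pmf J dflt (\<lambda>_. rademacher)) (\<lambda>\<omega>. \<omega> k)
     = measure_pmf.expectation (map_pmf (\<lambda>\<omega>. \<omega> k) (Pi_pmf J dflt (\<lambda>_. rademacher))) (\<lambda>v. v)"
    by simp
  also have "map_pmf (\<lambda>\<omega>. \<omega> k) (Pi_pmf J dflt (\<lambda>_. rademacher)) = rademacher"
    using Pi_pmf_component[OF assms(1), of k dflt "\<lambda>_. rademacher"] assms by simp
  also have "measure_pmf.expectation rademacher (\<lambda>v. v) = 0"
    unfolding rademacher_def by (subst integral_pmf_of_set) auto
  finally show ?thesis .
qed

lemma expectation_Pi_rademacher_product:
  assumes fin: "finite J" and k: "k \<in> J" and l: "l \<in> J"
  shows "measure_pmf.expectation (Pi_pmf J dflt (\<lambda>_. rademacher)) (\<lambda>\<omega>. \<omega> k * \<omega> l)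
           = (if k = l then 1 else 0)"
proof (cases "k = l")
  case True
  have "AE \<omega> in measure_pmf (Pi_pmf J dflt (\<lambda>_. rademacher)). \<omega> k * \<omega> l = 1"
  proof (rule AE_pmfI)
    fix \<omega> assume "\<omega> \<in> set_pmf (Pi_pmf J dflt (\<lambda>_. rademacher))"
    then have "\<omega> k \<in> {-1, 1}" using Pi_rademacher_sign[OF fin _ k] by blast
    then show "\<omega> k * \<omega> l = 1" using True by auto
  qed
  then have "measure_pmf.expectation (Pi_pmf J dflt (\<lambda>_. rademacher)) (\<lambda>\<omega>. \<omega> k * \<omega> l)
       = measure_pmf.expectation (Pi_pmf J dflt (\<lambda>_. rademacher)) (\<lambda>\<omega>. 1)"
    by (intro integral_cong_AE) simp_all
  then show ?thesis using True by simp
next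
  case False
  note P = measure_pmf.prob_space_axioms[of "Pi_pmf J dflt (\<lambda>_. rademacher)"]
  have "prob_space.indep_vars (measure_pmf (Pi_pmf J dflt (\<lambda>_. rademacher)))
          (\<lambda>_. borel) (\<lambda>k \<omega>. \<omega> k) {k, l}"
    by (rule prob_space.indep_vars_subset[OF P indep_vars_Pi_rademacher[OF fin]]) (use k l in auto)
  then have "measure_pmf.expectation (Pi_pmf J dflt (\<lambda>_. rademacher)) (\<lambda>\<omega>. \<Prod>x\<in>{k,l}. \<omega> x)
      = (\<Prod>x\<in>{k,l}. measure_pmf.expectation (Pi_pmf J dflt (\<lambda>_. rademacher)) (\<lambda>\<omega>. \<omega> x))"
    by (intro prob_space.indep_vars_lebesgue_integral[OF P])
       (auto intro: integrable_measure_pmf_finite finite_set_Pi_rademacher[OF fin])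
  also have "\<dots> = 0" using expectation_Pi_rademacher[OF fin k] False by simp
  finally show ?thesis using False by simp
qed

lemma expectation_Pi_rademacher_sum_square:
  assumes fin: "finite J" and B: "B \<subseteq> J"
  shows "measure_pmf.expectation (Pi_pmf J dflt (\<lambda>_. rademacher)) (\<lambda>\<omega>. (\<Sum>k\<in>B. \<alpha> k * \<omega> k)^2)
         = (\<Sum>k\<in>B. (\<alpha> k)^2)"
proof -
  have finB: "finite B" using fin B finite_subset by blast
  have sq: "(\<Sum>k\<in>B. \<alpha> k * \<omega> k)^2 = (\<Sum>k\<in>B. \<Sum>l\<in>B. \<alpha> k * \<alpha> l * (\<omega> k * \<omega> l))"
    for \<omega> :: "_ \<Rightarrow> real"
    by (simp add: power2_eq_square sum_product algebra_simps)
  have int: "integrable (measure_pmf (Pi_pmf J dflt (\<lambda>_. rademacher))) f" for f :: "_ \<Rightarrow> real"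
    by (rule integrable_measure_pmf_finite[OF finite_set_Pi_rademacher[OF fin]])
  have "measure_pmf.expectation (Pi_pmf J dflt (\<lambda>_. rademacher)) (\<lambda>\<omega>. (\<Sum>k\<in>B. \<alpha> k * \<omega> k)^2)
      = (\<Sum>k\<in>B. \<Sum>l\<in>B. \<alpha> k * \<alpha> l *
           measure_pmf.expectation (Pi_pmf J dflt (\<lambda>_. rademacher)) (\<lambda>\<omega>. \<omega> k * \<omega> l))"
    unfolding sq by (simp add: Bochner_Integration.integral_sum int)
  also have "\<dots> = (\<Sum>k\<in>B. \<Sum>l\<in>B. if l = k then \<alpha> k * \<alpha> l else 0)"
    using B by (intro sum.cong refl) (auto simp: expectation_Pi_rademacher_product[OF fin] subset_iff)
  also have "\<dots> = (\<Sum>k\<in>B. (\<alpha> k)^2)"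
    using finB by (simp add: power2_eq_square)
  finally show ?thesis .
qed

lemma rademacher_sum_tail:
  assumes fin: "finite J" and t: "t > 0" and W: "(\<Sum>k\<in>J. (w k)^2) \<le> W"
  shows "measure_pmf.prob (Pi_pmf J dflt (\<lambda>_. rademacher)) {\<omega>. t \<le> \<bar>\<Sum>k\<in>J. w k * \<omega> k\<bar>}
          \<le> 2 * exp (- (t^2) / (2 * W))"
proof (cases "(\<Sum>k\<in>J. (w k)^2) = 0")
  case True
  then have "\<forall>k\<in>J. w k = 0" using fin by (subst (asm) sum_nonneg_eq_0_iff) auto
  then have "{\<omega>. t \<le> \<bar>\<Sum>k\<in>J. w k * \<omega> k\<bar>} = {}" using t by auto
  then show ?thesis by simp
next
  case False
  define M where "M = measure_pmf (Pi_pmf J dflt (\<lambda>_. rademacher))"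
  interpret P: prob_space M unfolding M_def by (rule measure_pmf.prob_space_axioms)
  have S: "(\<Sum>k\<in>J. (w k)^2) > 0" using False by (simp add: order_less_le sum_nonneg)
  have mean0: "(\<Sum>k\<in>J. P.expectation (\<lambda>\<omega>. w k * \<omega> k)) = 0"
    using expectation_Pi_rademacher[OF fin] unfolding M_def by (intro sum.neutral) simp
  interpret H: Hoeffding_ineq M J "\<lambda>k \<omega>. w k * \<omega> k" "\<lambda>k. - \<bar>w k\<bar>" "\<lambda>k. \<bar>w k\<bar>" 0
  proof unfold_locales
    show "finite J" by fact
    show "P.indep_vars (\<lambda>_. borel) (\<lambda>k \<omega>. w k * \<omega> k) J"
      unfolding M_def
      by (rule prob_space.indep_vars_compose2[OF measure_pmf.prob_space_axioms
            indep_vars_Pi_rademacher[OF fin], where Y="\<lambda>k v. w k * v"]) simp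
    fix k assume k: "k \<in> J"
    show "AE \<omega> in M. w k * \<omega> k \<in> {- \<bar>w k\<bar>..\<bar>w k\<bar>}"
      unfolding M_def
    proof (rule AE_pmfI)
      fix \<omega> assume "\<omega> \<in> set_pmf (Pi_pmf J dflt (\<lambda>_. rademacher))"
      then have "\<omega> k \<in> {-1, 1}" using Pi_rademacher_sign[OF fin _ k] by blast
      then show "w k * \<omega> k \<in> {- \<bar>w k\<bar>..\<bar>w k\<bar>}" by auto
    qed
  qed (use mean0 in simp)
  have range: "(\<Sum>k\<in>J. (\<bar>w k\<bar> - - \<bar>w k\<bar>)^2) = 4 * (\<Sum>k\<in>J. (w k)^2)"
    by (simp add: sum_distrib_left power_mult_distrib)
  have "P.prob {\<omega>\<in>space M. \<bar>(\<Sum>k\<in>J. w k * \<omega> k) - 0\<bar> \<ge> t}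
        \<le> 2 * exp (-2 * t^2 / (\<Sum>k\<in>J. (\<bar>w k\<bar> - - \<bar>w k\<bar>)^2))"
    using H.Hoeffding_ineq_abs_ge[of t] S t range by simp
  also have "-2 * t^2 / (\<Sum>k\<in>J. (\<bar>w k\<bar> - - \<bar>w k\<bar>)^2) = - (t^2) / (2 * (\<Sum>k\<in>J. (w k)^2))"
    unfolding range by simp
  also have "\<dots> \<le> - (t^2) / (2 * W)"
    using S W t by (intro divide_left_mono_neg frac_le) (auto intro: mult_pos_pos)
  finally show ?thesis unfolding M_def by simp
qed

definition sign_vec :: "nat \<Rightarrow> (nat \<Rightarrow> real) pmf" where
  "sign_vec d = Pi_pmf {..<d} undefined (\<lambda>_. rademacher)"

lemma sign_vec_sign: "s \<in> set_pmf (sign_vec d) \<Longrightarrow> k < d \<Longrightarrow> s k \<in> {-1, 1}"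
  unfolding sign_vec_def by (rule Pi_rademacher_sign) auto

lemma dot_self_sign_vec: "s \<in> set_pmf (sign_vec d) \<Longrightarrow> dot d s s = real d"
  by (intro dot_self_sign) (use sign_vec_sign in blast)

lemma PiE_dflt_undefined: "PiE_dflt A undefined B = PiE A B"
  by (auto simp: PiE_dflt_def PiE_def extensional_def Pi_def)

lemma pmf_of_set_sign_samples:
  "pmf_of_set (sign_samples d N) = Pi_pmf {1..N} undefined (\<lambda>_. sign_vec d)"
proof -
  have sign_vec: "sign_vec d = pmf_of_set (PiE {..<d} (\<lambda>_. {-1, 1::real}))"
    unfolding sign_vec_def rademacher_def by (subst Pi_pmf_of_set) (auto simp: PiE_dflt_undefined)
  have "Pi_pmf {1..N} undefined (\<lambda>_. sign_vec d)
      = pmf_of_set (PiE_dflt {1..N} undefined (\<lambda>_. PiE {..<d} (\<lambda>_. {-1, 1::real})))"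
    unfolding sign_vec by (rule Pi_pmf_of_set) (auto simp: PiE_eq_empty_iff intro!: finite_PiE)
  then show ?thesis by (simp add: PiE_dflt_undefined sign_samples_def)
qed

lemma prob_Pi_pmf_component:
  assumes "finite I" "i \<in> I"
  shows "measure_pmf.prob (Pi_pmf I dflt p) {f. P (f i)} = measure_pmf.prob (p i) {s. P s}"
proof -
  have "measure_pmf.prob (Pi_pmf I dflt p) {f. P (f i)}
      = measure_pmf.prob (map_pmf (\<lambda>f. f i) (Pi_pmf I dflt p)) {s. P s}"
    by (simp add: measure_map_pmf vimage_def)
  also have "map_pmf (\<lambda>f. f i) (Pi_pmf I dflt p) = p i"
    using Pi_pmf_component[OF assms(1), of i dflt p] assms(2) by simp
  finally show ?thesis .
qed

section \<open>Concentration of \<open>\<langle>s, P s\<rangle>\<close> via blocks of coordinates\<close>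

definition block :: "nat \<Rightarrow> nat \<Rightarrow> nat \<Rightarrow> nat set" where
  "block m d a = {k. k < d \<and> k div m = a}"

lemma finite_block [simp]: "finite (block m d a)"
  by (simp add: block_def)

lemma block_subset: "block m d a \<subseteq> {..<d}"
  by (auto simp: block_def)

lemma block_disjoint: "a \<noteq> b \<Longrightarrow> block m d a \<inter> block m d b = {}"
  by (auto simp: block_def)

lemma sum_blocks:
  assumes "m \<ge> 1"
  shows "(\<Sum>k<d. f k) = (\<Sum>a<d div m + 1. \<Sum>k\<in>block m d a. f k)"
proof -
  have "k div m < d div m + 1" if "k < d" for k
    using that div_le_mono[of k d m] by simp
  then have "(\<Union>a<d div m + 1. block m d a) = {..<d}" by (auto simp: block_def)
  then have "(\<Sum>k<d. f k) = sum f (\<Union>a<d div m + 1. block m d a)" by simp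
  also have "\<dots> = (\<Sum>a<d div m + 1. \<Sum>k\<in>block m d a. f k)"
    by (rule sum.UNION_disjoint) (auto simp: block_disjoint)
  finally show ?thesis .
qed

lemma card_block_le:
  assumes "m \<ge> 1"
  shows "card (block m d a) \<le> m"
proof -
  have "block m d a \<subseteq> {a*m..<a*m+m}"
  proof
    fix k assume "k \<in> block m d a"
    then have "a * m + k mod m = k"
      using div_mult_mod_eq[of k m] by (simp add: block_def mult.commute)
    moreover have "k mod m < m" using assms by simp
    ultimately show "k \<in> {a*m..<a*m+m}" by auto
  qed
  then have "card (block m d a) \<le> card {a*m..<a*m+m}" by (intro card_mono) auto
  then show ?thesis by simp
qed

lemma sum_card_blocks:
  assumes "m \<ge> 1"
  shows "(\<Sum>a<d div m + 1. real (card (block m d a))) = real d"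
  using sum_blocks[OF assms, of "\<lambda>_. (1::real)" d] by simp

lemma sum_card_blocks_square_le:
  assumes "m \<ge> 1"
  shows "(\<Sum>a<d div m + 1. (real (card (block m d a)))^2) \<le> real m * real d"
proof -
  have "(\<Sum>a<d div m + 1. (real (card (block m d a)))^2)
      \<le> (\<Sum>a<d div m + 1. real m * real (card (block m d a)))"
    using card_block_le[OF assms] by (intro sum_mono) (simp add: power2_eq_square mult_right_mono)
  also have "\<dots> = real m * real d" by (simp only: sum_distrib_left[symmetric] sum_card_blocks[OF assms])
  finally show ?thesis .
qed

definition block_coord :: "nat \<Rightarrow> nat \<Rightarrow> (nat \<Rightarrow> real) list \<Rightarrow> nat \<Rightarrow> nat \<Rightarrow> (nat \<Rightarrow> real) \<Rightarrow> real" where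
  "block_coord m d qs a c s = (\<Sum>k\<in>block m d a. (qs!c) k * s k)"

definition block_energy :: "nat \<Rightarrow> nat \<Rightarrow> (nat \<Rightarrow> real) list \<Rightarrow> nat \<Rightarrow> (nat \<Rightarrow> real) \<Rightarrow> real" where
  "block_energy m d qs a s = (\<Sum>c<length qs. (block_coord m d qs a c s)^2)"

definition block_cross ::
    "nat \<Rightarrow> nat \<Rightarrow> (nat \<Rightarrow> real) list \<Rightarrow> nat \<Rightarrow> nat \<Rightarrow> (nat \<Rightarrow> real) \<Rightarrow> real" where
  "block_cross m d qs a b s = (\<Sum>c<length qs. block_coord m d qs a c s * block_coord m d qs b c s)"

lemma sum_dot_square_block_decomp:
  fixes d :: nat
  assumes m: "m \<ge> 1"
  defines "M \<equiv> d div m + 1"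
  shows "(\<Sum>c<length qs. (dot d (qs!c) s)^2)
       = (\<Sum>a<M. block_energy m d qs a s) + (\<Sum>a<M. \<Sum>b\<in>{..<M} - {a}. block_cross m d qs a b s)"
proof -
  have dot_eq: "dot d (qs!c) s = (\<Sum>a<M. block_coord m d qs a c s)" for c
    unfolding dot_def block_coord_def M_def by (rule sum_blocks[OF m])
  have sq: "(\<Sum>a<M. \<beta> a)^2 = (\<Sum>a<M. (\<beta> a)^2) + (\<Sum>a<M. \<Sum>b\<in>{..<M} - {a}. \<beta> a * \<beta> b)"
    for \<beta> :: "nat \<Rightarrow> real"
  proof -
    have "(\<Sum>a<M. \<beta> a)^2 = (\<Sum>a<M. \<Sum>b<M. \<beta> a * \<beta> b)"
      by (simp add: power2_eq_square sum_product)
    also have "\<dots> = (\<Sum>a<M. (\<beta> a)^2 + (\<Sum>b\<in>{..<M} - {a}. \<beta> a * \<beta> b))"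
      by (intro sum.cong refl) (simp add: sum.remove power2_eq_square)
    finally show ?thesis by (simp add: sum.distrib)
  qed
  have "(\<Sum>c<length qs. (dot d (qs!c) s)^2)
      = (\<Sum>c<length qs. \<Sum>a<M. (block_coord m d qs a c s)^2)
       + (\<Sum>c<length qs. \<Sum>a<M. \<Sum>b\<in>{..<M} - {a}. block_coord m d qs a c s * block_coord m d qs b c s)"
    unfolding dot_eq sq by (simp add: sum.distrib)
  also have "\<dots> = (\<Sum>a<M. block_energy m d qs a s)
       + (\<Sum>a<M. \<Sum>c<length qs. \<Sum>b\<in>{..<M} - {a}. block_coord m d qs a c s * block_coord m d qs b c s)"
    unfolding block_energy_def by (simp add: sum.swap[of _ "{..<M}"])
  also have "\<dots> = (\<Sum>a<M. block_energy m d qs a s) + (\<Sum>a<M. \<Sum>b\<in>{..<M} - {a}. block_cross m d qs a b s)"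
    unfolding block_cross_def by (simp add: sum.swap[of _ "{..<length qs}"])
  finally show ?thesis .
qed

lemma block_energy_le_card:
  assumes on: "orthonormal_list d qs" and sign: "\<And>k. k \<in> block m d a \<Longrightarrow> s k \<in> {-1, 1}"
  shows "block_energy m d qs a s \<le> real (card (block m d a))"
proof -
  define z where "z = (\<lambda>k. if k \<in> block m d a then s k else 0)"
  have dot_z: "dot d w z = (\<Sum>k\<in>block m d a. w k * s k)" for w
  proof -
    have "dot d w z = (\<Sum>k<d. if k \<in> block m d a then w k * s k else 0)"
      unfolding dot_def z_def by (intro sum.cong) auto
    also have "\<dots> = (\<Sum>k\<in>{..<d} \<inter> block m d a. w k * s k)"
      by (simp add: sum.inter_restrict)
    also have "{..<d} \<inter> block m d a = block m d a" using block_subset by blast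
    finally show ?thesis .
  qed
  have "block_energy m d qs a s = (\<Sum>c<length qs. (dot d (qs!c) z)^2)"
    by (simp add: block_energy_def block_coord_def dot_z)
  also have "\<dots> \<le> dot d z z" by (rule bessel_inequality[OF on])
  also have "\<dots> = (\<Sum>k\<in>block m d a. 1)"
    unfolding dot_z by (intro sum.cong) (auto simp: z_def dest!: sign)
  finally show ?thesis by simp
qed

lemma indep_vars_block_energy:
  "prob_space.indep_vars (measure_pmf (sign_vec d)) (\<lambda>_. borel) (\<lambda>a s. block_energy m d qs a s) L"
proof -
  note P = measure_pmf.prob_space_axioms[of "sign_vec d"]
  have R: "prob_space.indep_vars (measure_pmf (sign_vec d)) (\<lambda>a. PiM (block m d a) (\<lambda>_. borel))
        (\<lambda>a \<omega>. restrict (\<lambda>k. \<omega> k) (block m d a)) L"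
    unfolding sign_vec_def
    by (rule prob_space.indep_vars_restrict[OF P[unfolded sign_vec_def] indep_vars_Pi_rademacher])
       (auto simp: block_subset disjoint_family_on_def block_disjoint)
  have meas: "(\<lambda>y. \<Sum>c<length qs. (\<Sum>k\<in>block m d a. (qs!c) k * y k)^2)
      \<in> borel_measurable (PiM (block m d a) (\<lambda>_. borel))" for a
    by measurable
  have "prob_space.indep_vars (measure_pmf (sign_vec d)) (\<lambda>_. borel)
     (\<lambda>a \<omega>. (\<lambda>y. \<Sum>c<length qs. (\<Sum>k\<in>block m d a. (qs!c) k * y k)^2)
              (restrict (\<lambda>k. \<omega> k) (block m d a))) L"
    by (rule prob_space.indep_vars_compose2[OF P R meas])
  then show ?thesis by (simp add: block_energy_def block_coord_def)
qed

lemma expectation_block_energy: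
  "measure_pmf.expectation (sign_vec d) (block_energy m d qs a)
     = (\<Sum>c<length qs. \<Sum>k\<in>block m d a. ((qs!c) k)^2)"
proof -
  have int: "integrable (measure_pmf (sign_vec d)) f" for f :: "_ \<Rightarrow> real"
    unfolding sign_vec_def by (rule integrable_measure_pmf_finite[OF finite_set_Pi_rademacher]) simp
  have "measure_pmf.expectation (sign_vec d) (block_energy m d qs a)
      = (\<Sum>c<length qs. measure_pmf.expectation (sign_vec d)
            (\<lambda>s. (\<Sum>k\<in>block m d a. (qs!c) k * s k)^2))"
    unfolding block_energy_def block_coord_def by (simp add: Bochner_Integration.integral_sum int)
  also have "\<dots> = (\<Sum>c<length qs. \<Sum>k\<in>block m d a. ((qs!c) k)^2)"
    unfolding sign_vec_def
    by (intro sum.cong refl expectation_Pi_rademacher_sum_square) (auto simp: block_subset)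
  finally show ?thesis .
qed

lemma sum_expectation_block_energy:
  assumes on: "orthonormal_list d qs" and m: "m \<ge> 1"
  shows "(\<Sum>a<d div m + 1. measure_pmf.expectation (sign_vec d) (block_energy m d qs a))
           = real (length qs)"
proof -
  have "(\<Sum>a<d div m + 1. measure_pmf.expectation (sign_vec d) (block_energy m d qs a))
      = (\<Sum>c<length qs. \<Sum>a<d div m + 1. \<Sum>k\<in>block m d a. ((qs!c) k)^2)"
    unfolding expectation_block_energy by (rule sum.swap)
  also have "\<dots> = (\<Sum>c<length qs. \<Sum>k<d. ((qs!c) k)^2)"
    by (intro sum.cong refl sum_blocks[OF m, symmetric])
  also have "\<dots> = (\<Sum>c<length qs. 1)"
    using on by (intro sum.cong refl) (auto simp: orthonormal_list_def dot_def power2_eq_square)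
  finally show ?thesis by simp
qed

lemma sum_block_energy_tail:
  assumes on: "orthonormal_list d qs" and m: "m \<ge> 1" and d: "d \<ge> 1"
  defines "M \<equiv> d div m + 1"
  shows "measure_pmf.prob (sign_vec d)
           {s. real (length qs) + real d / 8 \<le> (\<Sum>a<M. block_energy m d qs a s)}
          \<le> exp (- (real d / (32 * real m)))"
proof -
  define mu where "mu = (\<Sum>a<M. measure_pmf.expectation (sign_vec d) (block_energy m d qs a))"
  interpret H: Hoeffding_ineq "measure_pmf (sign_vec d)" "{..<M}" "\<lambda>a s. block_energy m d qs a s"
     "\<lambda>_. 0" "\<lambda>a. real (card (block m d a))" mu
  proof unfold_locales
    show "prob_space.indep_vars (measure_pmf (sign_vec d)) (\<lambda>_. borel)
            (\<lambda>a s. block_energy m d qs a s) {..<M}"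
      by (rule indep_vars_block_energy)
    fix a
    show "AE s in measure_pmf (sign_vec d). block_energy m d qs a s \<in> {0..real (card (block m d a))}"
    proof (rule AE_pmfI)
      fix s assume "s \<in> set_pmf (sign_vec d)"
      then have "block_energy m d qs a s \<le> real (card (block m d a))"
        using block_energy_le_card[OF on] sign_vec_sign block_subset by blast
      then show "block_energy m d qs a s \<in> {0..real (card (block m d a))}"
        by (simp add: block_energy_def sum_nonneg)
    qed
  qed (simp_all add: mu_def)
  have mu_eq: "mu = real (length qs)"
    unfolding mu_def M_def by (rule sum_expectation_block_energy[OF on m])
  have S: "(\<Sum>a<M. (real (card (block m d a)) - 0)^2) \<le> real m * real d"
    using sum_card_blocks_square_le[OF m] by (simp add: M_def)
  have S_pos: "(\<Sum>a<M. (real (card (block m d a)) - 0)^2) > 0"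
  proof -
    have "real n \<le> (real n - 0)^2" for n :: nat
      by (cases n) (auto simp: power2_eq_square)
    then have "real d \<le> (\<Sum>a<M. (real (card (block m d a)) - 0)^2)"
      unfolding sum_card_blocks[OF m, of d, symmetric] M_def by (intro sum_mono)
    then show ?thesis using d by linarith
  qed
  have "measure_pmf.prob (sign_vec d)
          {s \<in> space (measure_pmf (sign_vec d)). mu + real d / 8 \<le> (\<Sum>a<M. block_energy m d qs a s)}
        \<le> exp (- 2 * (real d / 8)^2 / (\<Sum>a<M. (real (card (block m d a)) - 0)^2))"
    using d by (intro H.Hoeffding_ineq_ge[OF _ S_pos]) simp
  also have "\<dots> \<le> exp (- 2 * (real d / 8)^2 / (real m * real d))"
    using S S_pos d by (intro exp_mono divide_left_mono_neg) auto
  also have "- 2 * (real d / 8)^2 / (real m * real d) = - (real d / (32 * real m))"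
    using d m by (simp add: power2_eq_square field_simps)
  finally show ?thesis by (simp add: mu_eq)
qed

lemma block_cross_tail:
  assumes on: "orthonormal_list d qs" and m: "m \<ge> 1" and ab: "a \<noteq> b" and t: "t > 0"
  shows "measure_pmf.prob (sign_vec d) {s. t \<le> \<bar>block_cross m d qs a b s\<bar>}
           \<le> 2 * exp (- (t^2) / (2 * real m))"
  unfolding sign_vec_def
proof (rule prob_Pi_pmf_le_by_sections)
  show "finite {..<d}" "block m d a \<subseteq> {..<d}" by (simp_all add: block_subset)
  fix g assume g: "g \<in> set_pmf (Pi_pmf ({..<d} - block m d a) undefined (\<lambda>_. rademacher))"
  have g_sign: "g k \<in> {-1, 1}" if "k \<in> block m d b" for k
    using Pi_rademacher_sign[OF _ g] that block_subset[of m d b] block_disjoint[OF ab, of m d] by blast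
  define w where "w = (\<lambda>k. \<Sum>c<length qs. block_coord m d qs b c g * (qs!c) k)"
  have restrict_eq: "block_cross m d qs a b (\<lambda>x. if x \<in> block m d a then f x else g x)
      = (\<Sum>k\<in>block m d a. w k * f k)" for f
  proof -
    have "block_coord m d qs b c (\<lambda>x. if x \<in> block m d a then f x else g x) = block_coord m d qs b c g"
      for c
      unfolding block_coord_def using block_disjoint[OF ab, of m d] by (intro sum.cong) auto
    moreover have "block_coord m d qs a c (\<lambda>x. if x \<in> block m d a then f x else g x)
        = (\<Sum>k\<in>block m d a. (qs!c) k * f k)" for c
      unfolding block_coord_def by (intro sum.cong) auto
    ultimately show ?thesis
      unfolding block_cross_def w_def
      by (simp add: sum_distrib_left sum_distrib_right sum.swap[of _ "block m d a"] algebra_simps)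
  qed
  have W: "(\<Sum>k\<in>block m d a. (w k)^2) \<le> real m"
  proof -
    have "(\<Sum>k\<in>block m d a. (w k)^2) \<le> (\<Sum>k<d. (w k)^2)"
      by (intro sum_mono2) (auto simp: block_subset)
    also have "\<dots> = dot d w w" by (simp add: dot_def power2_eq_square)
    also have "\<dots> = block_energy m d qs b g"
      unfolding w_def block_energy_def by (rule dot_self_orthonormal_lincomb[OF on])
    also have "\<dots> \<le> real (card (block m d b))" by (rule block_energy_le_card[OF on g_sign])
    also have "\<dots> \<le> real m" using card_block_le[OF m] by simp
    finally show ?thesis .
  qed
  have "measure_pmf.prob (Pi_pmf (block m d a) undefined (\<lambda>_. rademacher))
          {f. t \<le> \<bar>\<Sum>k\<in>block m d a. w k * f k\<bar>} \<le> 2 * exp (- (t^2) / (2 * real m))"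
    by (rule rademacher_sum_tail[OF _ t W]) simp
  then show "measure_pmf.prob (Pi_pmf (block m d a) undefined (\<lambda>_. rademacher))
     {f. (\<lambda>x. if x \<in> block m d a then f x else g x) \<in> {s. t \<le> \<bar>block_cross m d qs a b s\<bar>}}
     \<le> 2 * exp (- (t^2) / (2 * real m))"
    by (simp add: restrict_eq)
qed

lemma dot_perp_self_ge_if_blocks_small:
  assumes on: "orthonormal_list d qs" and m: "m \<ge> 1" and sign: "\<forall>k<d. s k \<in> {-1, 1}"
    and t: "0 \<le> t" and energy: "(\<Sum>a<d div m + 1. block_energy m d qs a s) \<le> E"
    and cross: "\<And>a b. a < d div m + 1 \<Longrightarrow> b \<in> {..<d div m + 1} - {a} \<Longrightarrow>
                  \<bar>block_cross m d qs a b s\<bar> \<le> t"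
  shows "real d - E - real (d div m + 1)^2 * t \<le> dot d s (perp d qs s)"
proof -
  define M where "M = d div m + 1"
  have "(\<Sum>a<M. \<Sum>b\<in>{..<M} - {a}. block_cross m d qs a b s) \<le> (\<Sum>a<M. \<Sum>b\<in>{..<M} - {a}. t)"
    using cross by (intro sum_mono) (force simp: M_def abs_le_iff)
  also have "\<dots> \<le> (\<Sum>a<M. real M * t)"
    using t by (intro sum_mono) (simp add: card_Diff_subset mult_right_mono)
  finally have "(\<Sum>a<M. \<Sum>b\<in>{..<M} - {a}. block_cross m d qs a b s) \<le> real M^2 * t"
    by (simp add: power2_eq_square)
  moreover have "dot d s (perp d qs s) = real d - (\<Sum>c<length qs. (dot d (qs!c) s)^2)"
    by (simp add: dot_self_perp dot_self_sign[OF sign])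
  ultimately show ?thesis
    using energy sum_dot_square_block_decomp[OF m, of d qs s] by (simp add: M_def)
qed

lemma dot_perp_self_tail:
  assumes on: "orthonormal_list d qs" and rank: "length qs \<le> d div 2" and m: "m \<ge> 1" and d: "d \<ge> 1"
  defines "M \<equiv> d div m + 1"
  defines "t \<equiv> real d / (8 * real M^2)"
  shows "measure_pmf.prob (sign_vec d) {s. dot d s (perp d qs s) < real d / 4}
         \<le> exp (- (real d / (32 * real m))) + real M^2 * (2 * exp (- (t^2) / (2 * real m)))"
proof -
  define F1 where "F1 = {s. real (length qs) + real d / 8 \<le> (\<Sum>a<M. block_energy m d qs a s)}"
  define F2 where "F2 = (\<lambda>a b. {s. t \<le> \<bar>block_cross m d qs a b s\<bar>})"
  have t_pos: "t > 0" using d by (simp add: t_def M_def)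
  have "{s. dot d s (perp d qs s) < real d / 4} \<inter> set_pmf (sign_vec d)
          \<subseteq> F1 \<union> (\<Union>a<M. \<Union>b\<in>{..<M} - {a}. F2 a b)"
  proof (rule ccontr)
    assume "\<not> ?thesis"
    then obtain s where s: "s \<in> set_pmf (sign_vec d)" and small: "dot d s (perp d qs s) < real d / 4"
      and not_F1: "s \<notin> F1" and not_F2: "\<And>a b. a < M \<Longrightarrow> b \<in> {..<M} - {a} \<Longrightarrow> s \<notin> F2 a b"
      by blast
    have "\<forall>k<d. s k \<in> {-1, 1}" using sign_vec_sign[OF s] by blast
    moreover have "(\<Sum>a<d div m + 1. block_energy m d qs a s) \<le> real (length qs) + real d / 8"
      using not_F1 by (simp add: F1_def M_def)
    moreover have "\<bar>block_cross m d qs a b s\<bar> \<le> t"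
      if "a < d div m + 1" "b \<in> {..<d div m + 1} - {a}" for a b
      using not_F2[of a b] that by (simp add: F2_def M_def)
    ultimately have "real d - (real (length qs) + real d / 8) - real M^2 * t \<le> dot d s (perp d qs s)"
      unfolding M_def using t_pos by (intro dot_perp_self_ge_if_blocks_small[OF on m]) auto
    then show False using small rank d by (simp add: t_def M_def)
  qed
  then have "measure_pmf.prob (sign_vec d) {s. dot d s (perp d qs s) < real d / 4}
      \<le> measure_pmf.prob (sign_vec d) (F1 \<union> (\<Union>a<M. \<Union>b\<in>{..<M} - {a}. F2 a b))"
    by (subst measure_Int_set_pmf[symmetric]) (rule measure_pmf.finite_measure_mono, simp_all)
  also have "\<dots> \<le> measure_pmf.prob (sign_vec d) F1
       + (\<Sum>a<M. \<Sum>b\<in>{..<M} - {a}. measure_pmf.prob (sign_vec d) (F2 a b))"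
    by (intro order.trans[OF measure_Un_le] add_left_mono order.trans[OF measure_UNION_le]
          sum_mono measure_UNION_le) auto
  also have "\<dots> \<le> exp (- (real d / (32 * real m)))
       + (\<Sum>a<M. \<Sum>b\<in>{..<M} - {a}. 2 * exp (- (t^2) / (2 * real m)))"
    unfolding F1_def F2_def M_def
    by (intro add_mono sum_mono sum_block_energy_tail[OF on m d] block_cross_tail[OF on m _ t_pos])
       auto
  also have "(\<Sum>a<M. \<Sum>b\<in>{..<M} - {a}. 2 * exp (- (t^2) / (2 * real m)))
      \<le> (\<Sum>a<M. real M * (2 * exp (- (t^2) / (2 * real m))))"
    by (intro sum_mono) (simp add: card_Diff_subset mult_right_mono)
  finally show ?thesis by (simp add: power2_eq_square)
qed

lemma dot_perp_cross_tail:
  assumes on: "orthonormal_list d qs" and fin: "finite I" and ij: "i \<in> I" "j \<in> I" "i \<noteq> j"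
    and \<tau>: "\<tau> > 0"
  shows "measure_pmf.prob (Pi_pmf I undefined (\<lambda>_. sign_vec d)) {f. \<tau> \<le> \<bar>dot d (f i) (perp d qs (f j))\<bar>}
         \<le> 2 * exp (- (\<tau>^2) / (2 * real d))"
proof (rule prob_Pi_pmf_le_by_sections[OF fin, of "{i}"])
  show "{i} \<subseteq> I" using ij by simp
  fix g assume g: "g \<in> set_pmf (Pi_pmf (I - {i}) undefined (\<lambda>_. sign_vec d))"
  have gj: "g j \<in> set_pmf (sign_vec d)"
    using set_Pi_pmf_subset'[of "I - {i}" undefined "\<lambda>_. sign_vec d"] g ij fin
    by (auto simp: PiE_dflt_def)
  define w where "w = perp d qs (g j)"
  have W: "(\<Sum>k<d. (w k)^2) \<le> real d"
  proof -
    have "(\<Sum>k<d. (w k)^2) = dot d (g j) (g j) - (\<Sum>c<length qs. (dot d (qs!c) (g j))^2)"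
      by (simp add: dot_def[symmetric] power2_eq_square w_def dot_perp_perp[OF on] dot_self_perp)
    then show ?thesis by (simp add: dot_self_sign_vec[OF gj] sum_nonneg)
  qed
  have "measure_pmf.prob (sign_vec d) {a. \<tau> \<le> \<bar>\<Sum>k<d. w k * a k\<bar>} \<le> 2 * exp (- (\<tau>^2) / (2 * real d))"
    unfolding sign_vec_def by (rule rademacher_sum_tail[OF _ \<tau> W]) simp
  then show "measure_pmf.prob (Pi_pmf {i} undefined (\<lambda>_. sign_vec d))
      {f. (\<lambda>x. if x \<in> {i} then f x else g x) \<in> {f. \<tau> \<le> \<bar>dot d (f i) (perp d qs (f j))\<bar>}}
      \<le> 2 * exp (- (\<tau>^2) / (2 * real d))"
    using ij by (simp add: Pi_pmf_singleton measure_map_pmf vimage_def w_def dot_def mult.commute)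
qed

section \<open>A descent point on the good event\<close>

lemma sum_row_bounds:
  fixes G :: "'a \<Rightarrow> 'a \<Rightarrow> real"
  assumes fin: "finite I" and i: "i \<in> I" and off: "\<And>j. j \<in> I - {i} \<Longrightarrow> \<bar>G i j\<bar> \<le> e"
  shows "G i i - (real (card I) - 1) * e \<le> (\<Sum>j\<in>I. G i j)"
    and "(\<Sum>j\<in>I. G i j) \<le> G i i + (real (card I) - 1) * e"
proof -
  have split: "(\<Sum>j\<in>I. G i j) = G i i + (\<Sum>j\<in>I - {i}. G i j)"
    using fin i by (simp add: sum.remove)
  have "card I \<ge> 1" using fin i by (auto simp: Suc_le_eq card_gt_0_iff)
  then have card: "real (card (I - {i})) = real (card I) - 1"
    using fin i by (simp add: card_Diff_singleton of_nat_diff)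
  have "\<bar>\<Sum>j\<in>I - {i}. G i j\<bar> \<le> (\<Sum>j\<in>I - {i}. \<bar>G i j\<bar>)" by (rule sum_abs)
  also have "\<dots> \<le> real (card (I - {i})) * e"
    by (rule sum_bounded_above) (rule off)
  finally have "\<bar>\<Sum>j\<in>I - {i}. G i j\<bar> \<le> (real (card I) - 1) * e" unfolding card .
  then show "G i i - (real (card I) - 1) * e \<le> (\<Sum>j\<in>I. G i j)"
    and "(\<Sum>j\<in>I. G i j) \<le> G i i + (real (card I) - 1) * e"
    unfolding split by linarith+
qed

text \<open>The witness is \<open>-U/\<bar>U\<bar>\<close> with \<open>U = \<Sum>\<^sub>j P y\<^sub>j\<close>: \<open>\<langle>y\<^sub>i, U\<rangle>\<close> is the \<open>i\<close>-th row sum and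
  \<open>\<bar>U\<bar>\<^sup>2\<close> the total sum of the Gram matrix \<open>\<langle>y\<^sub>i, P y\<^sub>j\<rangle>\<close>.\<close>

lemma exists_unit_direction_perp:
  fixes y :: "'a \<Rightarrow> nat \<Rightarrow> real"
  assumes on: "orthonormal_list d qs" and fin: "finite I" and ne: "I \<noteq> {}" and r: "r > 0"
    and rows: "\<And>i. i \<in> I \<Longrightarrow> r \<le> (\<Sum>j\<in>I. dot d (y i) (perp d qs (y j)))"
    and total: "(\<Sum>i\<in>I. \<Sum>j\<in>I. dot d (y i) (perp d qs (y j))) \<le> T"
  shows "\<exists>x\<in>unit_ball d. (\<forall>u. in_span_list d qs u \<longrightarrow> dot d u x = 0)
            \<and> (\<forall>i\<in>I. dot d (y i) x \<le> - r / sqrt T)"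
proof -
  define U where "U = (\<lambda>k. \<Sum>j\<in>I. perp d qs (y j) k)"
  define nU where "nU = dot d U U"
  have dot_U: "dot d w U = (\<Sum>j\<in>I. dot d w (perp d qs (y j)))" for w
    unfolding U_def by (rule dot_sum_right)
  have nU_eq: "nU = (\<Sum>i\<in>I. \<Sum>j\<in>I. dot d (y i) (perp d qs (y j)))"
    unfolding nU_def by (subst (1) U_def) (simp add: dot_sum_left dot_U dot_perp_perp[OF on])
  have "real (card I) * r \<le> nU"
    using sum_mono[OF rows, of I] nU_eq by simp
  moreover have "0 < real (card I) * r" using fin ne r by (simp add: card_gt_0_iff)
  ultimately have nU_pos: "nU > 0" by linarith
  define x where "x = (\<lambda>k. - U k / sqrt nU)"
  have dot_x: "dot d w x = - dot d w U / sqrt nU" for w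
    by (simp add: x_def dot_def sum_divide_distrib[symmetric] sum_negf)
  have "(\<Sum>k<d. (x k)^2) = (\<Sum>k<d. U k * U k) / nU"
    unfolding x_def using nU_pos by (simp add: power_divide power2_eq_square sum_divide_distrib)
  then have "x \<in> unit_ball d" using nU_pos by (simp add: unit_ball_def nU_def dot_def)
  moreover have "dot d u x = 0" if "in_span_list d qs u" for u
    using dot_span_perp[OF that] by (simp add: dot_x dot_U)
  moreover have "dot d (y i) x \<le> - r / sqrt T" if "i \<in> I" for i
  proof -
    have "r / sqrt T \<le> dot d (y i) U / sqrt nU"
      using rows[OF that] r nU_pos total nU_eq by (intro frac_le) (auto simp: dot_U)
    then show ?thesis by (simp add: dot_x)
  qed
  ultimately show ?thesis by blast
qed

lemma FAV_le_of_orthogonal_rows: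
  assumes d: "0 < d div 2" and N: "1 \<le> NN d \<delta>" and e: "e \<le> 1"
    and rows: "\<And>j. j < d div 2 \<Longrightarrow> (\<Sum>k<d. A j k * x k) = 0"
    and corr: "\<And>i. i \<in> {1..NN d \<delta>} \<Longrightarrow> (\<Sum>k<d. vvec d s i k * x k) \<le> - e"
  shows "FAV d \<delta> A s x \<le> - (1 / (sqrt (real d) * LL d)) * e"
proof -
  have "(\<lambda>j. \<bar>\<Sum>k<d. A j k * x k\<bar>) ` {..<d div 2} = {0}"
    using d rows by (auto simp: image_iff intro!: bexI[of _ 0])
  then have Ax: "infnorm_Ax d A x = 0" by (simp add: infnorm_Ax_def)
  have "(\<Sum>k<d. vvec d s i k * x k) - real i * gam d \<delta> \<le> - e" if "i \<in> {1..NN d \<delta>}" for i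
  proof -
    have "0 \<le> real i * gam d \<delta>" by (simp add: gam_def)
    then show ?thesis using corr[OF that] by linarith
  qed
  then have "Max ((\<lambda>i. (\<Sum>k<d. vvec d s i k * x k) - real i * gam d \<delta>) ` {1..NN d \<delta>}) \<le> - e"
    using N by (subst Max_le_iff) auto
  moreover have "1 / (sqrt (real d) * LL d) \<ge> 0" by (simp add: LL_def)
  ultimately have "1 / (sqrt (real d) * LL d) * max (LL d * infnorm_Ax d A x - 1)
       (Max ((\<lambda>i. (\<Sum>k<d. vvec d s i k * x k) - real i * gam d \<delta>) ` {1..NN d \<delta>}))
     \<le> 1 / (sqrt (real d) * LL d) * (- e)"
    using e by (intro mult_left_mono) (auto simp: Ax)
  then show ?thesis by (simp add: FAV_def)
qed

lemma exists_direction_if_good_samples: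
  fixes s :: "'a \<Rightarrow> nat \<Rightarrow> real"
  assumes on: "orthonormal_list d qs" and fin: "finite I" and ne: "I \<noteq> {}" and d: "d > 0"
    and sign: "\<And>i k. i \<in> I \<Longrightarrow> k < d \<Longrightarrow> s i k \<in> {-1, 1}"
    and diag: "\<And>i. i \<in> I \<Longrightarrow> real d / 4 \<le> dot d (s i) (perp d qs (s i))"
    and off: "\<And>i j. i \<in> I \<Longrightarrow> j \<in> I \<Longrightarrow> i \<noteq> j \<Longrightarrow>
               \<bar>dot d (s i) (perp d qs (s j))\<bar> \<le> real d / (8 * real (card I))"
  shows "\<exists>x\<in>unit_ball d. (\<forall>u. in_span_list d qs u \<longrightarrow> dot d u x = 0)
           \<and> (\<forall>i\<in>I. dot d (s i) x \<le> - (real d / 8) / sqrt (2 * real (card I) * real d))"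
proof -
  define N where "N = card I"
  define G where "G = (\<lambda>i j. dot d (s i) (perp d qs (s j)))"
  have N_ge: "real N \<ge> 1" using fin ne by (simp add: N_def Suc_le_eq card_gt_0_iff)
  have slack: "(real N - 1) * (real d / (8 * real N)) \<le> real d / 8"
    using N_ge d by (simp add: field_simps)
  have row_ge: "real d / 8 \<le> (\<Sum>j\<in>I. G i j)" and row_le: "(\<Sum>j\<in>I. G i j) \<le> 2 * real d"
    if i: "i \<in> I" for i
  proof -
    have "G i i \<le> real d"
      using sign[OF i] by (simp add: G_def dot_self_perp dot_self_sign sum_nonneg)
    moreover have "real d / 4 \<le> G i i" using diag[OF i] by (simp add: G_def)
    moreover have off_i: "\<bar>G i j\<bar> \<le> real d / (8 * real N)" if "j \<in> I - {i}" for j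
      using off i that by (auto simp: G_def N_def)
    moreover note sum_row_bounds[where G=G, OF fin i off_i, folded N_def]
    ultimately show "real d / 8 \<le> (\<Sum>j\<in>I. G i j)" and "(\<Sum>j\<in>I. G i j) \<le> 2 * real d"
      using slack by linarith+
  qed
  have "(\<Sum>i\<in>I. \<Sum>j\<in>I. G i j) \<le> (\<Sum>i\<in>I. 2 * real d)" by (intro sum_mono row_le)
  then have total: "(\<Sum>i\<in>I. \<Sum>j\<in>I. G i j) \<le> 2 * real N * real d" by (simp add: N_def)
  show ?thesis
    using exists_unit_direction_perp[OF on fin ne _ row_ge[unfolded G_def] total[unfolded G_def]] d
    by (simp add: N_def)
qed

lemma descent_point_if_good_samples:
  fixes A s :: "nat \<Rightarrow> nat \<Rightarrow> real"
  assumes on: "orthonormal_list d qs"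
    and span: "\<And>j. j < d div 2 \<Longrightarrow> in_span_list d qs (A j)"
    and d2: "d \<ge> 2" and N1: "NN d \<delta> \<ge> 1" and lnd: "(ln (real d))^2 \<ge> 12"
    and sign: "\<And>i k. i \<in> {1..NN d \<delta>} \<Longrightarrow> k < d \<Longrightarrow> s i k \<in> {-1, 1}"
    and diag: "\<And>i. i \<in> {1..NN d \<delta>} \<Longrightarrow> real d / 4 \<le> dot d (s i) (perp d qs (s i))"
    and off: "\<And>i j. i \<in> {1..NN d \<delta>} \<Longrightarrow> j \<in> {1..NN d \<delta>} \<Longrightarrow> i \<noteq> j \<Longrightarrow>
               \<bar>dot d (s i) (perp d qs (s j))\<bar> \<le> real d / (8 * real (NN d \<delta>))"
  shows "\<exists>x\<in>unit_ball d. FAV d \<delta> A s x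
             \<le> - (1 / (sqrt (real d) * LL d)) * (1 / (sqrt (real (NN d \<delta>)) * (ln (real d))^2))"
proof -
  define N where "N = NN d \<delta>"
  have N_ge: "real N \<ge> 1" using N1 by (simp add: N_def)
  have d_pos: "real d > 0" using d2 by simp
  have "\<exists>x\<in>unit_ball d. (\<forall>u. in_span_list d qs u \<longrightarrow> dot d u x = 0)
      \<and> (\<forall>i\<in>{1..N}. dot d (s i) x \<le> - (real d / 8) / sqrt (2 * real (card {1..N}) * real d))"
    using sign diag off N1 d2 by (intro exists_direction_if_good_samples[OF on]) (auto simp: N_def)
  then obtain x where x: "x \<in> unit_ball d" and null: "\<And>u. in_span_list d qs u \<Longrightarrow> dot d u x = 0"
    and corr: "\<And>i. i \<in> {1..N} \<Longrightarrow> dot d (s i) x \<le> - (real d / 8) / sqrt (2 * real N * real d)"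
    by auto
  define e where "e = 1 / (sqrt (real N) * (ln (real d))^2)"
  have "8 * sqrt 2 \<le> (12::real)"
    by (rule power2_le_imp_le) (simp_all add: power_mult_distrib)
  then have "8 * sqrt 2 * sqrt (real N) \<le> (ln (real d))^2 * sqrt (real N)"
    using lnd by (intro mult_right_mono) auto
  then have e_le: "e \<le> 1 / (8 * sqrt 2 * sqrt (real N))"
    using N_ge unfolding e_def by (intro frac_le) (auto simp: mult.commute)
  have "1 * 1 \<le> sqrt (real N) * (ln (real d))^2"
    using N_ge lnd by (intro mult_mono) auto
  then have e_le_1: "e \<le> 1" by (simp add: e_def)
  have "(\<Sum>k<d. vvec d s i k * x k) \<le> - e" if "i \<in> {1..N}" for i
  proof -
    have "(\<Sum>k<d. vvec d s i k * x k) = dot d (s i) x / sqrt (real d)"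
      by (simp add: vvec_def dot_def sum_divide_distrib)
    also have "\<dots> \<le> - (real d / 8) / sqrt (2 * real N * real d) / sqrt (real d)"
      by (rule divide_right_mono[OF corr[OF that]]) simp
    also have "\<dots> = - (1 / (8 * sqrt 2 * sqrt (real N)))"
    proof -
      have "sqrt (2 * real N * real d) * sqrt (real d) = sqrt 2 * sqrt (real N) * real d"
        by (simp add: real_sqrt_mult mult.assoc)
      then show ?thesis unfolding divide_divide_eq_left using d_pos by simp
    qed
    finally show ?thesis using e_le by linarith
  qed
  moreover have "(\<Sum>k<d. A j k * x k) = 0" if "j < d div 2" for j
    using null[OF span[OF that]] by (simp add: dot_def)
  ultimately have "FAV d \<delta> A s x \<le> - (1 / (sqrt (real d) * LL d)) * e"
    using d2 N1 e_le_1 by (intro FAV_le_of_orthogonal_rows) (auto simp: N_def)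
  then show ?thesis using x by (auto simp: e_def N_def)
qed

lemma prob_bad_samples_le:
  assumes on: "orthonormal_list d qs" and rank: "length qs \<le> d div 2" and m: "m \<ge> 1"
    and d: "d \<ge> 1" and \<tau>: "\<tau> > 0"
  defines "M \<equiv> d div m + 1"
  defines "t \<equiv> real d / (8 * real M^2)"
  shows "measure_pmf.prob (Pi_pmf {1..N} undefined (\<lambda>_. sign_vec d))
       ((\<Union>i\<in>{1..N}. {f. dot d (f i) (perp d qs (f i)) < real d / 4})
        \<union> (\<Union>i\<in>{1..N}. \<Union>j\<in>{1..N} - {i}. {f. \<tau> \<le> \<bar>dot d (f i) (perp d qs (f j))\<bar>}))
     \<le> real N * (exp (- (real d / (32 * real m))) + real M^2 * (2 * exp (- (t^2) / (2 * real m))))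
       + real N * real N * (2 * exp (- (\<tau>^2) / (2 * real d)))"
proof -
  define I where "I = {1..N}"
  define \<mu> where "\<mu> = Pi_pmf I undefined (\<lambda>_. sign_vec d)"
  define D where "D = (\<lambda>i::nat. {f. dot d (f i) (perp d qs (f i)) < real d / 4})"
  define C where "C = (\<lambda>i j::nat. {f. \<tau> \<le> \<bar>dot d (f i) (perp d qs (f j))\<bar>})"
  have "measure_pmf.prob \<mu> ((\<Union>i\<in>I. D i) \<union> (\<Union>i\<in>I. \<Union>j\<in>I - {i}. C i j))
      \<le> measure_pmf.prob \<mu> (\<Union>i\<in>I. D i) + measure_pmf.prob \<mu> (\<Union>i\<in>I. \<Union>j\<in>I - {i}. C i j)"
    by (rule measure_Un_le) auto
  also have "measure_pmf.prob \<mu> (\<Union>i\<in>I. D i) \<le> (\<Sum>i\<in>I. measure_pmf.prob \<mu> (D i))"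
    by (rule measure_UNION_le) (auto simp: I_def)
  also have "\<dots> \<le> (\<Sum>i\<in>I. exp (- (real d / (32 * real m))) + real M^2 * (2 * exp (- (t^2) / (2 * real m))))"
  proof (intro sum_mono)
    fix i assume "i \<in> I"
    then have "measure_pmf.prob \<mu> (D i)
        = measure_pmf.prob (sign_vec d) {s. dot d s (perp d qs s) < real d / 4}"
      unfolding \<mu>_def D_def by (intro prob_Pi_pmf_component) (auto simp: I_def)
    also have "\<dots> \<le> exp (- (real d / (32 * real m))) + real M^2 * (2 * exp (- (t^2) / (2 * real m)))"
      unfolding M_def t_def by (rule dot_perp_self_tail[OF on rank m d])
    finally show "measure_pmf.prob \<mu> (D i)
        \<le> exp (- (real d / (32 * real m))) + real M^2 * (2 * exp (- (t^2) / (2 * real m)))" .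
  qed
  also have "measure_pmf.prob \<mu> (\<Union>i\<in>I. \<Union>j\<in>I - {i}. C i j)
      \<le> (\<Sum>i\<in>I. \<Sum>j\<in>I - {i}. measure_pmf.prob \<mu> (C i j))"
    by (intro order.trans[OF measure_UNION_le] sum_mono measure_UNION_le) (auto simp: I_def)
  also have "\<dots> \<le> (\<Sum>i\<in>I. \<Sum>j\<in>I - {i}. 2 * exp (- (\<tau>^2) / (2 * real d)))"
    unfolding \<mu>_def C_def by (intro sum_mono dot_perp_cross_tail[OF on _ _ _ _ \<tau>]) (auto simp: I_def)
  also have "\<dots> \<le> (\<Sum>i\<in>I. real N * (2 * exp (- (\<tau>^2) / (2 * real d))))"
    by (intro sum_mono) (auto simp: I_def card_Diff_subset mult_right_mono)
  finally show ?thesis by (simp add: I_def \<mu>_def D_def C_def)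
qed

lemma prob_descent_point_ge:
  fixes A :: "nat \<Rightarrow> nat \<Rightarrow> real"
  assumes d2: "d \<ge> 2" and N1: "NN d \<delta> \<ge> 1" and lnd: "(ln (real d))^2 \<ge> 12" and m: "m \<ge> 1"
  defines "N \<equiv> NN d \<delta>"
  defines "M \<equiv> d div m + 1"
  defines "t \<equiv> real d / (8 * real M^2)"
  defines "\<tau> \<equiv> real d / (8 * real N)"
  shows "1 - (real N * (exp (- (real d / (32 * real m))) + real M^2 * (2 * exp (- (t^2) / (2 * real m))))
            + real N * real N * (2 * exp (- (\<tau>^2) / (2 * real d))))
     \<le> measure_pmf.prob (pmf_of_set (sign_samples d N))
       {s. \<exists>x\<in>unit_ball d. FAV d \<delta> A s x
             \<le> - (1 / (sqrt (real d) * LL d)) * (1 / (sqrt (real N) * (ln (real d))^2))}"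
proof -
  obtain qs where "length qs \<le> length (map A [0..<d div 2])" and on: "orthonormal_list d qs"
    and "\<forall>u\<in>set (map A [0..<d div 2]). in_span_list d qs u"
    using gram_schmidt_exists by blast
  then have rank: "length qs \<le> d div 2" and span: "\<And>j. j < d div 2 \<Longrightarrow> in_span_list d qs (A j)"
    by auto
  define \<mu> where "\<mu> = Pi_pmf {1..N} undefined (\<lambda>_. sign_vec d)"
  define E where "E = {s. \<exists>x\<in>unit_ball d. FAV d \<delta> A s x
             \<le> - (1 / (sqrt (real d) * LL d)) * (1 / (sqrt (real N) * (ln (real d))^2))}"
  define Bad where "Bad = (\<Union>i\<in>{1..N}. {f. dot d (f i) (perp d qs (f i)) < real d / 4})
        \<union> (\<Union>i\<in>{1..N}. \<Union>j\<in>{1..N} - {i}. {f. \<tau> \<le> \<bar>dot d (f i) (perp d qs (f j))\<bar>})"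
  have "- E \<inter> set_pmf \<mu> \<subseteq> Bad"
  proof (rule subsetI, rule ccontr)
    fix f assume f: "f \<in> - E \<inter> set_pmf \<mu>" and good: "f \<notin> Bad"
    have "f i \<in> set_pmf (sign_vec d)" if "i \<in> {1..N}" for i
      using set_Pi_pmf_subset'[of "{1..N}" undefined "\<lambda>_. sign_vec d"] f that
      by (auto simp: \<mu>_def PiE_dflt_def)
    then have sign: "\<And>i k. i \<in> {1..NN d \<delta>} \<Longrightarrow> k < d \<Longrightarrow> f i k \<in> {-1, 1}"
      using sign_vec_sign by (auto simp: N_def)
    have diag: "\<And>i. i \<in> {1..NN d \<delta>} \<Longrightarrow> real d / 4 \<le> dot d (f i) (perp d qs (f i))"
      using good by (auto simp: Bad_def N_def not_less)
    have off: "\<bar>dot d (f i) (perp d qs (f j))\<bar> \<le> real d / (8 * real (NN d \<delta>))"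
      if "i \<in> {1..NN d \<delta>}" "j \<in> {1..NN d \<delta>}" "i \<noteq> j" for i j
    proof -
      have "\<not> \<tau> \<le> \<bar>dot d (f i) (perp d qs (f j))\<bar>" using good that by (auto simp: Bad_def N_def)
      then show ?thesis by (simp add: \<tau>_def N_def)
    qed
    have "f \<in> E"
      using descent_point_if_good_samples[OF on span d2 N1 lnd sign diag off]
      unfolding E_def N_def by simp
    then show False using f by simp
  qed
  then have "measure_pmf.prob \<mu> (- E) \<le> measure_pmf.prob \<mu> Bad"
    by (subst measure_Int_set_pmf[symmetric]) (rule measure_pmf.finite_measure_mono, simp_all)
  also have "\<dots> \<le> real N * (exp (- (real d / (32 * real m)))
      + real M^2 * (2 * exp (- (t^2) / (2 * real m)))) + real N * real N * (2 * exp (- (\<tau>^2) / (2 * real d)))"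
    unfolding \<mu>_def Bad_def M_def t_def
    by (rule prob_bad_samples_le[OF on rank m]) (use d2 N1 in \<open>simp_all add: \<tau>_def N_def\<close>)
  finally have "measure_pmf.prob \<mu> (- E) \<le> \<dots>" .
  moreover have "measure_pmf.prob \<mu> E = 1 - measure_pmf.prob \<mu> (- E)"
    using measure_pmf.prob_compl[of E \<mu>] by (simp add: Compl_eq_Diff_UNIV)
  ultimately show ?thesis
    unfolding pmf_of_set_sign_samples \<mu>_def[symmetric] E_def[symmetric] by linarith
qed

section \<open>Asymptotics\<close>

text \<open>An upper bound for the failure probability in \<open>prob_descent_point_ge\<close>, with blocks of size
  \<open>\<lfloor>x\<^bsup>9/10\<^esup>\<rfloor>\<close>.\<close>

definition failure_bound :: "real \<Rightarrow> real" where
  "failure_bound x = x powr (1/6) * (exp (- (x powr (1/10) / 32))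
       + 9 * x powr (1/5) * (2 * exp (- (x powr (7/10) / 10368))))
     + x powr (1/3) * (2 * exp (- (x powr (2/3) / 128)))"

lemma one_less_of_nat_if_ln_pos: "0 < ln (real d) \<Longrightarrow> 1 < real d"
  by (cases "d = 0") (auto intro: ln_gt_zero_imp_gt_one)

lemma NN_le_root:
  assumes d: "1 \<le> ln (real d)" and "0 < \<delta>" "\<delta> < 1"
  shows "real (NN d \<delta>) \<le> real d powr (1/6)"
proof -
  have d_gt: "real d > 1" using d by (intro one_less_of_nat_if_ln_pos) simp
  have "real (NN d \<delta>) \<le> real d powr (\<delta>/6) / (ln (real d))^4"
    unfolding NN_def by (simp add: divide_nonneg_nonneg)
  also have "\<dots> \<le> real d powr (\<delta>/6) / 1"
    using d by (intro divide_left_mono) (simp_all add: one_le_power)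
  also have "\<dots> \<le> real d powr (1/6)" using assms d_gt by (simp add: powr_mono)
  finally show ?thesis .
qed

lemma block_size_bounds:
  fixes d :: nat
  assumes x: "real d > 1" and p: "2 \<le> real d powr (9/10)"
  defines "m \<equiv> nat \<lfloor>real d powr (9/10)\<rfloor>"
  shows "real d powr (9/10) / 2 \<le> real m" and "real m \<le> real d powr (9/10)"
    and "real (d div m + 1)^2 \<le> 9 * real d powr (1/5)"
proof -
  show m_le: "real m \<le> real d powr (9/10)" using p by (simp add: m_def)
  have "real m = of_int \<lfloor>real d powr (9/10)\<rfloor>" using p by (simp add: m_def)
  then show m_ge: "real d powr (9/10) / 2 \<le> real m" using p by linarith
  have "real (d div m) \<le> real d / real m" by (rule of_nat_div_le_of_nat)
  also have "\<dots> \<le> real d / (real d powr (9/10) / 2)"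
    using m_ge p x by (intro divide_left_mono mult_pos_pos) auto
  also have "\<dots> = 2 * real d powr (1/10)"
    using x by (simp add: powr_diff[symmetric] field_simps powr_add[symmetric])
  finally have "real (d div m + 1) \<le> 3 * real d powr (1/10)"
    using x ge_one_powr_ge_zero[of "real d" "1/10"] by simp
  then have "real (d div m + 1)^2 \<le> (3 * real d powr (1/10))^2"
    by (intro power_mono) auto
  also have "\<dots> = 9 * real d powr (1/5)"
    using x by (simp add: power_mult_distrib powr_realpow[symmetric] powr_powr)
  finally show "real (d div m + 1)^2 \<le> 9 * real d powr (1/5)" .
qed

lemma diag_failure_le:
  fixes d :: nat
  assumes x: "real d > 1" and p: "2 \<le> real d powr (9/10)"
  defines "m \<equiv> nat \<lfloor>real d powr (9/10)\<rfloor>"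
  defines "M \<equiv> d div m + 1"
  defines "t \<equiv> real d / (8 * real M^2)"
  shows "exp (- (real d / (32 * real m))) + real M^2 * (2 * exp (- (t^2) / (2 * real m)))
     \<le> exp (- (real d powr (1/10) / 32)) + 9 * real d powr (1/5) * (2 * exp (- (real d powr (7/10) / 10368)))"
proof -
  note m = block_size_bounds[OF x p, folded m_def, folded M_def]
  define p where "p = real d powr (9/10)"
  have m_pos: "real m > 0" using m(1) p by (simp add: p_def)
  have "real d powr (1/10) / 32 = real d / (32 * p)"
    using x by (simp add: p_def field_simps powr_add[symmetric])
  also have "\<dots> \<le> real d / (32 * real m)"
    using m(2) m_pos x by (intro divide_left_mono) (auto simp: p_def)
  finally have T1: "exp (- (real d / (32 * real m))) \<le> exp (- (real d powr (1/10) / 32))" by simp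
  have "real d powr (4/5) / 72 = real d / (8 * (9 * real d powr (1/5)))"
    using x by (simp add: powr_diff[symmetric] field_simps powr_add[symmetric])
  also have "\<dots> \<le> t"
    using m(3) x unfolding t_def by (intro divide_left_mono) (auto simp: M_def)
  finally have t_ge: "real d powr (4/5) / 72 \<le> t" .
  have "real d powr (7/10) / 10368 = (real d powr (4/5) / 72)^2 / (2 * p)"
    using x by (simp add: p_def power2_eq_square powr_add[symmetric] powr_diff[symmetric] field_simps)
  also have "\<dots> \<le> t^2 / (2 * real m)"
    using t_ge m(2) m_pos x by (intro frac_le power_mono) (auto simp: p_def)
  finally have T2: "exp (- (t^2) / (2 * real m)) \<le> exp (- (real d powr (7/10) / 10368))" by simp
  show ?thesis
    using T1 T2 m(3) by (intro add_mono mult_mono) auto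
qed

lemma cross_failure_le:
  assumes x: "real d > 1" and N: "1 \<le> real N" "real N \<le> real d powr (1/6)"
  shows "real N * real N * (2 * exp (- ((real d / (8 * real N))^2) / (2 * real d)))
     \<le> real d powr (1/3) * (2 * exp (- (real d powr (2/3) / 128)))"
proof -
  have NN: "real N * real N \<le> real d powr (1/3)"
    using mult_mono[OF N(2) N(2)] N by (simp add: powr_add[symmetric])
  have "real d powr (2/3) / 128 = real d / (128 * real d powr (1/3))"
    using x by (simp add: powr_diff[symmetric] field_simps powr_add[symmetric])
  also have "\<dots> \<le> real d / (128 * (real N * real N))"
    using NN N x by (intro divide_left_mono) auto
  also have "\<dots> = (real d / (8 * real N))^2 / (2 * real d)"
    using x N by (simp add: power2_eq_square field_simps)
  finally show ?thesis
    using NN by (intro mult_mono) auto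
qed

lemma prob_descent_point_ge_failure_bound:
  fixes A :: "nat \<Rightarrow> nat \<Rightarrow> real"
  assumes \<delta>: "0 < \<delta>" "\<delta> < 1" and lnd: "4 \<le> ln (real d)" and N1: "1 \<le> NN d \<delta>"
    and p: "2 \<le> real d powr (9/10)"
  shows "1 - failure_bound (real d)
     \<le> measure_pmf.prob (pmf_of_set (sign_samples d (NN d \<delta>)))
       {s. \<exists>x\<in>unit_ball d. FAV d \<delta> A s x
             \<le> - (1 / (sqrt (real d) * LL d)) * (1 / (sqrt (real (NN d \<delta>)) * (ln (real d))^2))}"
proof -
  define m where "m = nat \<lfloor>real d powr (9/10)\<rfloor>"
  have x: "real d > 1" using lnd by (intro one_less_of_nat_if_ln_pos) simp
  have m1: "m \<ge> 1" using p by (simp add: m_def le_nat_iff)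
  have d2: "d \<ge> 2" using x by simp
  have "(4::real)^2 \<le> (ln (real d))^2" using lnd by (intro power_mono) auto
  then have lnd12: "(ln (real d))^2 \<ge> 12" by simp
  have N: "1 \<le> real (NN d \<delta>)" "real (NN d \<delta>) \<le> real d powr (1/6)"
    using N1 NN_le_root[OF _ \<delta>, of d] lnd by auto
  have "real (NN d \<delta>) * (exp (- (real d / (32 * real m)))
        + real (d div m + 1)^2 * (2 * exp (- ((real d / (8 * real (d div m + 1)^2))^2) / (2 * real m))))
      \<le> real d powr (1/6) * (exp (- (real d powr (1/10) / 32))
        + 9 * real d powr (1/5) * (2 * exp (- (real d powr (7/10) / 10368))))"
    by (rule mult_mono[OF N(2) diag_failure_le[OF x p, folded m_def]]) (auto intro: add_nonneg_nonneg)
  then show ?thesis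
    using prob_descent_point_ge[OF d2 N1 lnd12 m1, of A] cross_failure_le[OF x N]
    unfolding failure_bound_def by linarith
qed

lemma eventually_failure_bound_small:
  assumes \<delta>: "0 < \<delta>" and c: "c > 0"
  shows "eventually (\<lambda>x::real. 4 \<le> ln x \<and> 1 \<le> x powr (\<delta>/6) / ln x ^ 4 \<and> 2 \<le> x powr (9/10)
           \<and> x powr c * failure_bound x < 1) at_top"
proof -
  have "filterlim (\<lambda>x::real. ln x) at_top at_top" by real_asymp
  moreover have "filterlim (\<lambda>x::real. x powr (\<delta>/6) / ln x ^ 4) at_top at_top" using \<delta> by real_asymp
  moreover have "filterlim (\<lambda>x::real. x powr (9/10)) at_top at_top" by real_asymp
  moreover have "((\<lambda>x::real. x powr c * failure_bound x) \<longlongrightarrow> 0) at_top"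
    unfolding failure_bound_def using c by real_asymp
  ultimately show ?thesis
    unfolding filterlim_at_top by (intro eventually_conj order_tendstoD(2)[of _ 0]) auto
qed

lemma eventually_prob_descent_point:
  assumes \<delta>: "0 < \<delta>" "\<delta> < 1" and c: "c > 0"
  shows "eventually (\<lambda>d. \<forall>A. 1 - real d powr (-c)
     \<le> measure_pmf.prob (pmf_of_set (sign_samples d (NN d \<delta>)))
       {s. \<exists>x\<in>unit_ball d. FAV d \<delta> A s x
             \<le> - (1 / (sqrt (real d) * LL d)) * (1 / (sqrt (real (NN d \<delta>)) * (ln (real d))^2))})
     sequentially"
  using eventually_compose_filterlim[OF eventually_failure_bound_small[OF \<delta>(1) c]
      filterlim_real_sequentially]
proof eventually_elim
  case (elim d)
  then have "real d > 1" by (intro one_less_of_nat_if_ln_pos) simp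
  then have "1 - real d powr (-c) \<le> 1 - failure_bound (real d)"
    using elim by (simp add: powr_minus_divide field_simps)
  moreover have "1 \<le> NN d \<delta>" using elim by (simp add: NN_def le_nat_iff)
  ultimately show ?case
    using elim prob_descent_point_ge_failure_bound[OF \<delta>] by (meson order.trans)
qed

theorem lemma4p3:
  fixes \<delta> :: real
  assumes "0 < \<delta>" and "\<delta> < 1"
  shows "\<forall>c>0. \<exists>D. \<forall>d\<ge>D. even d \<longrightarrow> (\<forall>A\<in>sign_matrices d.
     measure_pmf.prob (pmf_of_set (sign_samples d (NN d \<delta>)))
       {s. \<exists>x\<in>unit_ball d. FAV d \<delta> A s x
             \<le> - (1 / (sqrt (real d) * LL d)) * (1 / (sqrt (real (NN d \<delta>)) * (ln (real d))^2))}
     \<ge> 1 - (real d) powr (-c))"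
  using eventually_prob_descent_point[OF assms] unfolding eventually_sequentially by blast

end
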